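(* Let $G$, $k\ge 3$, the choice strings $c_{i,j}$, $L=k+1$ and $d=k-2$ be as in the construction in the context, and let $s$ be a string of length $L$ such that every choice string $c_{i,j}$ ($1\le i<j\le k$) has a substring of length $L$ at Hamming distance at most $d$ from $s$. Then $s$ contains at least two encoding symbols and at least one occurrence of the synchronizing symbol $\#$.
   Context: Let $G=(V,E)$ be an undirected simple graph with $V=\{v_1,\dots,v_n\}$ and edge set $E=\{e_1,\dots,e_m\}$, and let $k\ge 3$ be an integer; put $N=\binom{k}{2}$. The alphabet consists of pairwise distinct symbols: encoding symbols $\sigma_1,\dots,\sigma_n$, string identification symbols $\varphi_1,\dots,\varphi_N$, and a synchronizing symbol $\#$. Order the pairs $(i,j)$ with $1\le i<j\le k$ lexicographically, $(1,2),(1,3),\dots,(1,k),(2,3),\dots,(k-1,k)$, and let $i'$ denote the position of $(i,j)$ in this order. For an edge $e$ joining $v_r$ and $v_s$ with $r<s$ define $\mathrm{block}(i,j,e)=\varphi_{i'}^{\,i-1}\,\sigma_r\,\varphi_{i'}^{\,j-i-1}\,\sigma_s\,\varphi_{i'}^{\,k-j}\,\#$ (a string of length $k+1$), and the choice string $c_{i,j}=\mathrm{block}(i,j,e_1)\,\varphi_{i'}^{\,k}\,\mathrm{block}(i,j,e_2)\,\varphi_{i'}^{\,k}\cdots\varphi_{i'}^{\,k}\,\mathrm{block}(i,j,e_m)$. Set $L=k+1$ and $d=k-2$. *)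

theory Defs
  imports Main
begin

datatype sym = Enc nat | Phi nat | Hash

(* position i' of the pair (i,j) in the lexicographic order of pairs 1 <= a < b <= k *)
definition pidx :: "nat \<Rightarrow> nat \<Rightarrow> nat \<Rightarrow> nat" where
  "pidx k i j = card {(a,b). 1 \<le> a \<and> a < b \<and> b \<le> k \<and> (a < i \<or> (a = i \<and> b \<le> j))}"

definition block :: "nat \<Rightarrow> nat \<Rightarrow> nat \<Rightarrow> nat \<times> nat \<Rightarrow> sym list" where
  "block k i j e = (let p = Phi (pidx k i j) in
     replicate (i - 1) p @ [Enc (fst e)] @ replicate (j - i - 1) p @ [Enc (snd e)]
     @ replicate (k - j) p @ [Hash])"

fun sep_concat :: "'a list \<Rightarrow> 'a list list \<Rightarrow> 'a list" where
  "sep_concat sep [] = []"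
| "sep_concat sep [x] = x"
| "sep_concat sep (x # xs) = x @ sep @ sep_concat sep xs"

definition choice_string :: "nat \<Rightarrow> (nat \<times> nat) list \<Rightarrow> nat \<Rightarrow> nat \<Rightarrow> sym list" where
  "choice_string k es i j =
     sep_concat (replicate k (Phi (pidx k i j))) (map (block k i j) es)"

definition hamming :: "'a list \<Rightarrow> 'a list \<Rightarrow> nat" where
  "hamming xs ys = length (filter (\<lambda>(x,y). x \<noteq> y) (zip xs ys))"

definition has_close_substring :: "nat \<Rightarrow> nat \<Rightarrow> 'a list \<Rightarrow> 'a list \<Rightarrow> bool" where
  "has_close_substring L d s t =
     (\<exists>p. p + L \<le> length t \<and> hamming (take L (drop p t)) s \<le> d)"

definition alphabet :: "nat \<Rightarrow> nat \<Rightarrow> sym set" where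
  "alphabet n k = {Enc r | r. 1 \<le> r \<and> r \<le> n} \<union> {Phi t | t. 1 \<le> t \<and> t \<le> k choose 2} \<union> {Hash}"

fun is_enc :: "sym \<Rightarrow> bool" where
  "is_enc (Enc _) = True" | "is_enc _ = False"

end

theory Submission
  imports Defs
begin

(*
  Since c_{i,j} has period 2k + 1 and encoding symbols and # occur in it only at residues
  i - 1, j - 1 and k, every window of length k + 1 consists of copies of phi_{i'} apart from at
  most two encoding symbols and at most one #.  A window within distance k - 2 of s agrees with s
  in at least 3 positions, so s contains at least 3 - min(e, 2) - min(h, 1) copies of phi_{i'},
  where e and h count the encoding symbols and the #'s of s.  If e < 2 or h = 0 this deficit is
  positive, and summing it over k pairs with distinct indices i' yields more than
  k + 1 - e - h symbols phi in s, which is impossible.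
*)

definition positions :: "('a \<Rightarrow> bool) \<Rightarrow> 'a list \<Rightarrow> nat set" where
  "positions P xs = {x. x < length xs \<and> P (xs ! x)}"

lemma card_positions: "card (positions P xs) = length (filter P xs)"
  by (simp add: positions_def length_filter_conv_card)

lemma finite_positions [simp]: "finite (positions P xs)"
  by (simp add: positions_def)

lemma card_positions_pos_iff: "0 < card (positions P xs) \<longleftrightarrow> (\<exists>x\<in>set xs. P x)"
  by (auto simp: card_gt_0_iff positions_def in_set_conv_nth) (use nth_mem in blast)

lemma hamming_add_card_agreements:
  assumes "length w = length s"
  shows "hamming w s + card {x. x < length w \<and> w ! x = s ! x} = length w"
proof -
  have "hamming w s = card {x. x < length w \<and> w ! x \<noteq> s ! x}"
    unfolding hamming_def length_filter_conv_card using assms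
    by (intro arg_cong[where f = card]) (auto simp: nth_zip)
  also have "\<dots> + card {x. x < length w \<and> w ! x = s ! x}
      = card ({x. x < length w \<and> w ! x \<noteq> s ! x} \<union> {x. x < length w \<and> w ! x = s ! x})"
    by (rule card_Un_disjoint[symmetric]) auto
  also have "{x. x < length w \<and> w ! x \<noteq> s ! x} \<union> {x. x < length w \<and> w ! x = s ! x}
      = {..<length w}" by auto
  finally show ?thesis by simp
qed

lemma card_agreements_le:
  assumes "length w = length s"
    and "\<forall>x<length w. w ! x = a \<or> P (w ! x) \<or> Q (w ! x)"
    and "card (positions P w) \<le> m" "card (positions Q w) \<le> n"
  shows "card {x. x < length w \<and> w ! x = s ! x}
    \<le> card (positions ((=) a) s) + min (card (positions P s)) m + min (card (positions Q s)) n"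
proof -
  have card_Int: "card (A \<inter> B) \<le> min (card A) (card B)" if "finite A" "finite B" for A B :: "nat set"
    using that by (simp add: card_mono)
  have "card {x. x < length w \<and> w ! x = s ! x}
      \<le> card (positions ((=) a) s \<union> (positions P s \<inter> positions P w) \<union> (positions Q s \<inter> positions Q w))"
    using assms(1,2) by (intro card_mono) (auto simp: positions_def)
  also have "\<dots> \<le> card (positions ((=) a) s) + card (positions P s \<inter> positions P w)
        + card (positions Q s \<inter> positions Q w)"
    by (meson card_Un_le add_le_mono1 order_trans)
  also have "\<dots> \<le> card (positions ((=) a) s) + min (card (positions P s)) m
      + min (card (positions Q s)) n"
    using card_Int[of "positions P s" "positions P w"] card_Int[of "positions Q s" "positions Q w"]
      assms(3,4) by (intro add_mono) auto
  finally show ?thesis .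
qed

lemma sum_card_positions_le:
  assumes "finite T" "\<forall>t\<in>T. \<not> P t \<and> \<not> Q t" "\<forall>x. \<not> (P x \<and> Q x)"
  shows "(\<Sum>t\<in>T. card (positions ((=) t) s)) + card (positions P s) + card (positions Q s)
    \<le> length s"
proof -
  have "(\<Sum>t\<in>T. card (positions ((=) t) s)) = card (\<Union>t\<in>T. positions ((=) t) s)"
    using assms(1) by (intro card_UN_disjoint[symmetric]) (auto simp: positions_def)
  also have "\<dots> + card (positions P s) = card ((\<Union>t\<in>T. positions ((=) t) s) \<union> positions P s)"
    using assms(1,2) by (intro card_Un_disjoint[symmetric]) (auto simp: positions_def)
  also have "\<dots> + card (positions Q s)
      = card ((\<Union>t\<in>T. positions ((=) t) s) \<union> positions P s \<union> positions Q s)"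
    using assms by (intro card_Un_disjoint[symmetric]) (auto simp: positions_def)
  also have "\<dots> \<le> card {..<length s}"
    by (intro card_mono) (auto simp: positions_def)
  finally show ?thesis by simp
qed

lemma length_sep_concat:
  assumes "\<forall>x\<in>set xs. length x = a" "length sep = b" "xs \<noteq> []"
  shows "length (sep_concat sep xs) + b = length xs * (a + b)"
  using assms
proof (induction sep xs rule: sep_concat.induct)
  case (3 sep x y ys)
  then show ?case by (cases ys) auto
qed auto

lemma div_less_length_sep_concat:
  assumes "\<forall>x\<in>set xs. length x = a" "length sep = b" "q < length (sep_concat sep xs)"
  shows "q div (a + b) < length xs"
proof -
  have "xs \<noteq> []" using assms(3) by auto
  then have "q < length xs * (a + b)"
    using length_sep_concat[OF assms(1,2)] assms(3) by linarith
  then show ?thesis by (simp add: less_mult_imp_div_less)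
qed

lemma nth_sep_concat:
  assumes "\<forall>x\<in>set xs. length x = a" "length sep = b"
    and "q < length (sep_concat sep xs)"
  shows "sep_concat sep xs ! q =
     (if q mod (a + b) < a then xs ! (q div (a + b)) ! (q mod (a + b))
      else sep ! (q mod (a + b) - a))"
  using assms
proof (induction sep xs arbitrary: q rule: sep_concat.induct)
  case (1 sep)
  then show ?case by simp
next
  case (2 sep x)
  then show ?case by (simp add: nth_append)
next
  case (3 sep x y ys)
  show ?case
  proof (cases "q < a + b")
    case True
    have lx: "length x = a" using 3(2) by simp
    have m: "q mod (a + b) = q" "q div (a + b) = 0" using True by simp_all
    show ?thesis
    proof (cases "q < a")
      case True
      then show ?thesis using lx m by (simp add: nth_append)
    next
      case False
      have "q - a < b" using False \<open>q < a + b\<close> by linarith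
      with False have "(x @ sep @ sep_concat sep (y # ys)) ! q = sep ! (q - a)"
        using lx \<open>q < a + b\<close> 3(3) by (simp add: nth_append)
      then show ?thesis using lx m False by simp
    qed
  next
    case False
    define q' where "q' = q - (a + b)"
    have q: "q = q' + (a + b)" using False q'_def by simp
    have "sep_concat sep (x # y # ys) ! q = sep_concat sep (y # ys) ! q'"
      using 3 q by (simp add: nth_append)
    moreover have "q' < length (sep_concat sep (y # ys))" using 3 q by simp
    ultimately show ?thesis using 3(1)[of q'] 3(2,3) q
      by (simp add: mod_add_self2 div_add_self2)
  qed
qed

lemma length_block: "1 \<le> i \<Longrightarrow> i < j \<Longrightarrow> j \<le> k \<Longrightarrow> length (block k i j e) = k + 1"
  by (simp add: block_def Let_def)

lemma nth_block:
  assumes "1 \<le> i" "i < j" "j \<le> k" "r \<le> k"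
  shows "block k i j e ! r =
    (if r = i - 1 then Enc (fst e) else if r = j - 1 then Enc (snd e)
     else if r = k then Hash else Phi (pidx k i j))"
  using assms by (auto simp: block_def Let_def nth_append)

lemma nth_choice_string:
  assumes "1 \<le> i" "i < j" "j \<le> k" "q < length (choice_string k es i j)"
  defines "r \<equiv> q mod (2 * k + 1)"
  shows "choice_string k es i j ! q =
    (if r = i - 1 then Enc (fst (es ! (q div (2 * k + 1))))
     else if r = j - 1 then Enc (snd (es ! (q div (2 * k + 1))))
     else if r = k then Hash else Phi (pidx k i j))"
proof -
  have lengths: "\<forall>x\<in>set (map (block k i j) es). length x = k + 1"
    using assms(1-3) by (auto simp: length_block)
  have period: "k + 1 + k = 2 * k + 1" by simp
  note nth = nth_sep_concat[OF lengths, of "replicate k (Phi (pidx k i j))" k q, unfolded period]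
  note bound = div_less_length_sep_concat[OF lengths, of "replicate k (Phi (pidx k i j))" k q,
      unfolded period]
  show ?thesis
  proof (cases "r \<le> k")
    case True
    then show ?thesis using nth bound assms nth_block[OF assms(1-3) True]
      by (simp add: choice_string_def)
  next
    case False
    have "r < 2 * k + 1" by (simp add: r_def)
    then have "r - (k + 1) < k" "i - 1 < r" "j - 1 < r" using False assms(2,3) by linarith+
    then show ?thesis using nth False assms(4) unfolding r_def by (simp add: choice_string_def)
  qed
qed

lemma inj_on_add_mod: "inj_on (\<lambda>x. (p + x) mod (M::nat)) {..<M}"
proof (rule inj_onI)
  fix x y assume "x \<in> {..<M}" "y \<in> {..<M}" and eq: "(p + x) mod M = (p + y) mod M"
  have "M dvd nat \<bar>int x - int y\<bar>"
    using eq by (simp only: mod_eq_iff_dvd_symdiff_nat) simp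
  moreover have "nat \<bar>int x - int y\<bar> < M" using \<open>x \<in> {..<M}\<close> \<open>y \<in> {..<M}\<close> by simp
  ultimately have "nat \<bar>int x - int y\<bar> = 0" using nat_dvd_not_less by blast
  then show "x = y" by simp
qed

lemma card_le_card_residues:
  fixes M :: nat
  assumes "\<And>x. x < l \<Longrightarrow> P x \<Longrightarrow> (p + x) mod M \<in> R" "l \<le> M" "finite R"
  shows "card {x. x < l \<and> P x} \<le> card R"
proof (rule card_inj_on_le)
  show "inj_on (\<lambda>x. (p + x) mod M) {x. x < l \<and> P x}"
    by (rule inj_on_subset[OF inj_on_add_mod]) (use assms(2) in auto)
qed (use assms(1,3) in auto)

lemma choice_string_window:
  assumes "1 \<le> i" "i < j" "j \<le> k" "p + (k + 1) \<le> length (choice_string k es i j)"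
  defines "w \<equiv> take (k + 1) (drop p (choice_string k es i j))"
  shows "length w = k + 1"
    and "\<forall>x<length w. w ! x = Phi (pidx k i j) \<or> is_enc (w ! x) \<or> w ! x = Hash"
    and "card (positions is_enc w) \<le> 2"
    and "card (positions ((=) Hash) w) \<le> 1"
proof -
  let ?c = "choice_string k es i j"
  show len: "length w = k + 1" using assms(4) by (simp add: w_def)
  have w: "w ! x = ?c ! (p + x)" "p + x < length ?c" if "x < k + 1" for x
    using that assms(4) by (simp_all add: w_def)
  let ?r = "\<lambda>x. (p + x) mod (2 * k + 1)"
  have symbols: "w ! x = Phi (pidx k i j) \<or> is_enc (w ! x) \<or> w ! x = Hash"
    and enc: "is_enc (w ! x) \<Longrightarrow> ?r x \<in> {i - 1, j - 1}"
    and hash: "Hash = w ! x \<Longrightarrow> ?r x \<in> {k}" if "x < k + 1" for x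
    using nth_choice_string[OF assms(1-3) w(2)[OF that]] w(1)[OF that] by (auto split: if_splits)
  show "\<forall>x<length w. w ! x = Phi (pidx k i j) \<or> is_enc (w ! x) \<or> w ! x = Hash"
    using symbols len by simp
  have "card (positions is_enc w) \<le> card {i - 1, j - 1}"
    using enc unfolding positions_def len by (rule card_le_card_residues) simp_all
  then show "card (positions is_enc w) \<le> 2"
    using card_insert_le_m1[of 2 "{j - 1}" "i - 1"] by simp
  have "card (positions ((=) Hash) w) \<le> card {k}"
    using hash unfolding positions_def len by (rule card_le_card_residues) simp_all
  then show "card (positions ((=) Hash) w) \<le> 1" by simp
qed

lemma has_close_substring_choice_string_count:
  assumes "1 \<le> i" "i < j" "j \<le> k" "2 \<le> k" "length s = k + 1"
    and "has_close_substring (k + 1) (k - 2) s (choice_string k es i j)"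
  shows "3 \<le> card (positions ((=) (Phi (pidx k i j))) s)
    + min (card (positions is_enc s)) 2 + min (card (positions ((=) Hash) s)) 1"
proof -
  obtain p where p: "p + (k + 1) \<le> length (choice_string k es i j)"
    and close: "hamming (take (k + 1) (drop p (choice_string k es i j))) s \<le> k - 2"
    using assms(6) unfolding has_close_substring_def by blast
  define w where "w = take (k + 1) (drop p (choice_string k es i j))"
  note window = choice_string_window[OF assms(1-3) p, folded w_def]
  have symbols: "\<forall>x<length w. w ! x = Phi (pidx k i j) \<or> is_enc (w ! x) \<or> Hash = w ! x"
    using window(2) by metis
  have "k + 1 \<le> k - 2 + card {x. x < length w \<and> w ! x = s ! x}"
    using hamming_add_card_agreements[of w s] close window(1) assms(5) unfolding w_def by simp
  then have "3 \<le> card {x. x < length w \<and> w ! x = s ! x}" using assms(4) by linarith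
  also have "\<dots> \<le> card (positions ((=) (Phi (pidx k i j))) s)
    + min (card (positions is_enc s)) 2 + min (card (positions ((=) Hash) s)) 1"
    using window(1,3,4) assms(5) by (intro card_agreements_le) (simp_all add: symbols)
  finally show ?thesis .
qed

lemma pidx_less:
  assumes "1 \<le> i'" "i' < j'" "j' \<le> k" "i < i' \<or> i = i' \<and> j < j'"
  shows "pidx k i j < pidx k i' j'"
proof -
  let ?below = "\<lambda>i j. {(a, b). 1 \<le> a \<and> a < b \<and> b \<le> k \<and> (a < i \<or> a = i \<and> b \<le> j)}"
  have "finite (?below i' j')"
    by (rule finite_subset[of _ "{..k} \<times> {..k}"]) auto
  moreover have "?below i j \<subseteq> ?below i' j'" using assms(4) by auto
  moreover have "(i', j') \<in> ?below i' j'" "(i', j') \<notin> ?below i j" using assms by auto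
  ultimately have "?below i j \<subset> ?below i' j'" by blast
  then have "card (?below i j) < card (?below i' j')"
    using \<open>finite (?below i' j')\<close> by (simp add: psubset_card_mono)
  then show ?thesis unfolding pidx_def .
qed

lemma inj_on_pidx: "inj_on (\<lambda>(i, j). pidx k i j) {(i, j). 1 \<le> i \<and> i < j \<and> j \<le> k}"
proof (rule inj_onI, clarify)
  fix i j i' j'
  assume "1 \<le> i" "i < j" "j \<le> k" "1 \<le> i'" "i' < j'" "j' \<le> k"
    and "pidx k i j = pidx k i' j'"
  then show "i = i' \<and> j = j'"
    using pidx_less[of i' j' k i j] pidx_less[of i j k i' j'] by (metis less_irrefl nat_neq_iff)
qed

lemma card_pair_indices_ge:
  assumes "3 \<le> k"
  shows "k \<le> card ((\<lambda>(i, j). pidx k i j) ` {(i, j). 1 \<le> i \<and> i < j \<and> j \<le> k})"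
proof -
  let ?pairs = "{(i, j). 1 \<le> i \<and> i < j \<and> j \<le> k}"
  let ?S = "insert (2, 3) ((\<lambda>j. (1, j)) ` {2..k}) :: (nat \<times> nat) set"
  have S: "?S \<subseteq> ?pairs" using assms by auto
  have "k = card ?S"
    using assms by (subst card_insert_disjoint) (auto simp: card_image inj_on_def)
  also have "\<dots> = card ((\<lambda>(i, j). pidx k i j) ` ?S)"
    by (rule card_image[symmetric], rule inj_on_subset[OF inj_on_pidx S])
  also have "\<dots> \<le> card ((\<lambda>(i, j). pidx k i j) ` ?pairs)"
    by (intro card_mono finite_imageI image_mono S)
      (rule finite_subset[of _ "{..k} \<times> {..k}"], auto)
  finally show ?thesis .
qed

lemma counts_from_deficit_bound:
  fixes k e h :: nat
  assumes "3 \<le> k" "k * (3 - min e 2 - min h 1) + e + h \<le> k + 1"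
  shows "2 \<le> e \<and> 1 \<le> h"
proof -
  have "min e 2 = e \<or> min e 2 = 2" "min h 1 = 0 \<and> h = 0 \<or> min h 1 = 1" "e = 0 \<or> e = 1 \<or> 2 \<le> e"
    by linarith+
  then show ?thesis using assms by (elim disjE conjE) (simp_all add: algebra_simps)
qed

theorem lemma1:
  fixes n k :: nat and es :: "(nat \<times> nat) list" and s :: "sym list"
  assumes k3: "k \<ge> 3"
    and edges_distinct: "distinct es"
    and edges_ok: "\<forall>(r, t) \<in> set es. 1 \<le> r \<and> r < t \<and> t \<le> n"
    and s_alph: "set s \<subseteq> alphabet n k"
    and s_len: "length s = k + 1"
    and close: "\<forall>i j. 1 \<le> i \<and> i < j \<and> j \<le> k \<longrightarrow>
                   has_close_substring (k + 1) (k - 2) s (choice_string k es i j)"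
  shows "length (filter is_enc s) \<ge> 2 \<and> Hash \<in> set s"
proof -
  define e where "e = card (positions is_enc s)"
  define h where "h = card (positions ((=) Hash) s)"
  define deficit where "deficit = 3 - min e 2 - min h 1"
  define I where "I = (\<lambda>(i, j). pidx k i j) ` {(i, j). 1 \<le> i \<and> i < j \<and> j \<le> k}"
  have I: "k \<le> card I" "finite I"
    using card_pair_indices_ge[OF k3, folded I_def] k3 by (auto intro: card_ge_0_finite)
  have "deficit \<le> card (positions ((=) (Phi t)) s)" if "t \<in> I" for t
    using that has_close_substring_choice_string_count[of _ _ k s es] close k3 s_len
    unfolding I_def e_def h_def deficit_def by fastforce
  then have "card I * deficit \<le> (\<Sum>t\<in>I. card (positions ((=) (Phi t)) s))"
    using sum_bounded_below[of I deficit] by simp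
  also have "\<dots> = (\<Sum>t\<in>Phi ` I. card (positions ((=) t) s))"
    by (simp add: sum.reindex inj_on_def)
  finally have "k * deficit \<le> (\<Sum>t\<in>Phi ` I. card (positions ((=) t) s))"
    using I(1) by (meson mult_le_mono1 order_trans)
  moreover have "\<forall>x. \<not> (is_enc x \<and> Hash = x)" by auto
  then have "(\<Sum>t\<in>Phi ` I. card (positions ((=) t) s)) + e + h \<le> k + 1"
    using sum_card_positions_le[of "Phi ` I" is_enc "(=) Hash" s] I(2) s_len
    unfolding e_def h_def by simp
  ultimately have "2 \<le> e \<and> 1 \<le> h"
    unfolding deficit_def by (intro counts_from_deficit_bound[OF k3]) linarith
  then show ?thesis
    using card_positions_pos_iff[of "(=) Hash" s] unfolding e_def h_def card_positions by auto
qed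

end
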